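(* Let $\mathcal{I}_\nu$ be as in the context. Then: (a) If $\nu\in\left(-1,-\tfrac12\right]$, the function $x\mapsto \mathcal{I}_\nu'(x)$ is strictly log-concave on $(0,\infty)$. (b) If $\nu>-1$, the function $x\mapsto \mathcal{I}_\nu'(x)$ is strictly log-concave on $\left(0,\sqrt{2(\nu+3)}\right)$. (c) If $\nu>-\tfrac12$, there exists $x_\nu>\sqrt{2(\nu+3)}$ such that $x\mapsto\mathcal{I}_\nu'(x)$ is strictly log-concave on $(0,x_\nu)$ and strictly log-convex on $(x_\nu,\infty)$.
   Context: For $\nu>-1$ define $\mathcal{I}_\nu:\mathbb{R}\to[1,\infty)$ by $\mathcal{I}_\nu(x)=\sum_{n\ge0}\frac{(1/4)^n}{(\nu+1)_n\, n!}x^{2n}$, where $(a)_n=a(a+1)\cdots(a+n-1)$, $(a)_0=1$. Equivalently $\mathcal{I}_\nu(x)=2^\nu\Gamma(\nu+1)x^{-\nu}I_\nu(x)$ for $x>0$, where $I_\nu$ is the modified Bessel function of the first kind. Note $\mathcal{I}_\nu'(x)>0$ for $x>0$. *)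

theory Defs
  imports "HOL-Analysis.Analysis"
begin

definition Ical :: "real \<Rightarrow> real \<Rightarrow> real" where
  "Ical \<nu> x = (\<Sum>n. (1/4)^n / (pochhammer (\<nu> + 1) n * fact n) * x ^ (2*n))"

definition strict_convex_on :: "real set \<Rightarrow> (real \<Rightarrow> real) \<Rightarrow> bool" where
  "strict_convex_on S f \<longleftrightarrow>
     (\<forall>x\<in>S. \<forall>y\<in>S. x \<noteq> y \<longrightarrow> (\<forall>t. 0 < t \<and> t < 1 \<longrightarrow>
        f ((1 - t) * x + t * y) < (1 - t) * f x + t * f y))"

definition strict_log_concave_on :: "real set \<Rightarrow> (real \<Rightarrow> real) \<Rightarrow> bool" where
  "strict_log_concave_on S f \<longleftrightarrow> (\<forall>x\<in>S. 0 < f x) \<and> strict_convex_on S (\<lambda>x. - ln (f x))"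

definition strict_log_convex_on :: "real set \<Rightarrow> (real \<Rightarrow> real) \<Rightarrow> bool" where
  "strict_log_convex_on S f \<longleftrightarrow> (\<forall>x\<in>S. 0 < f x) \<and> strict_convex_on S (\<lambda>x. ln (f x))"

end

theory Submission
  imports Defs "HOL-Computational_Algebra.Formal_Power_Series"
begin

(*
  Write f = I'_nu; it is positive on (0,oo).  On an interval, ln f is strictly concave
  (convex) as soon as the Laguerre expression  Lambda = f f'' - f'^2  is negative (positive)
  there.  Everything is done with power series:
  1. f is entire and satisfies  theta^2 f = (2nu+1) f + x^2 f - 2nu theta f,  theta = x d/dx.
  2. theta maps A = f^2, B = f theta f, C = (theta f)^2 into a closed linear system; eliminating
     B and C coefficientwise gives a recurrence for the coefficients A_k of A and the closed
     form  Lambda_k = (k-2)(2nu+1) A_(k+2) / (2(k+2nu+1))  for k >= 1, while Lambda_0 = -A_2 < 0.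
  3. So every Lambda_k, k >= 1, has the sign of 2nu+1.  For nu <= -1/2 this gives Lambda < 0
     (part a); for nu > -1/2, Lambda is strictly increasing on [0,oo) and eventually positive.
  4. At x0 = sqrt(2(nu+3)) the recurrence yields Lambda_(2j) x0^(2j) <= A_2 (j-1)/j!, strictly
     for j >= 2; as sum_j (j-1)/j! = 0 this forces Lambda(x0) < 0.  Monotonicity and the
     intermediate value theorem then give parts (b) and (c).
  The file first proves general facts on strict convexity and on power series, then develops
  the series of I_nu and f, the coefficient identities and estimates, the analytic properties
  of Lambda, and finally the theorem.
*)

lemma MVT_convex:
  fixes g g' :: "real \<Rightarrow> real"
  assumes S: "convex S" and uv: "u \<in> S" "v \<in> S" "u < v"
    and g: "\<And>x. x \<in> S \<Longrightarrow> (g has_real_derivative g' x) (at x)"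
  obtains c where "u < c" "c < v" "c \<in> S" "g v - g u = (v - u) * g' c"
proof -
  have sub: "{u..v} \<subseteq> S" by (rule atMostAtLeast_subset_convex[OF S uv])
  then obtain c where "u < c" "c < v" "g v - g u = (v - u) * g' c"
    using MVT2[OF \<open>u < v\<close>, of g g'] g by force
  then show ?thesis using sub by (intro that[of c]) auto
qed

(* A function with strictly increasing derivative on a convex set is strictly convex there:
   comparing the two mean value slopes on either side of a convex combination. *)
lemma strict_convex_on_if_deriv_increasing:
  fixes g g' :: "real \<Rightarrow> real"
  assumes S: "convex S"
    and g: "\<And>x. x \<in> S \<Longrightarrow> (g has_real_derivative g' x) (at x)"
    and mono: "\<And>x y. x \<in> S \<Longrightarrow> y \<in> S \<Longrightarrow> x < y \<Longrightarrow> g' x < g' y"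
  shows "strict_convex_on S g"
proof -
  have ordered: "g ((1 - t) * x + t * y) < (1 - t) * g x + t * g y"
    if xy: "x \<in> S" "y \<in> S" "x < y" and t: "0 < t" "t < 1" for x y t
  proof -
    define z where "z = (1 - t) * x + t * y"
    have zx: "z - x = t * (y - x)" and yz: "y - z = (1 - t) * (y - x)"
      unfolding z_def by (simp_all add: algebra_simps)
    have "t * (y - x) > 0" "(1 - t) * (y - x) > 0" using xy t by simp_all
    then have "x < z" "z < y" unfolding zx[symmetric] yz[symmetric] by simp_all
    moreover have "z \<in> S" using atMostAtLeast_subset_convex[OF S xy] \<open>x < z\<close> \<open>z < y\<close> by auto
    ultimately obtain a b where a: "x < a" "a < z" "a \<in> S" "g z - g x = (z - x) * g' a"
      and b: "z < b" "b < y" "b \<in> S" "g y - g z = (y - z) * g' b"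
      using MVT_convex[OF S _ _ _ g] xy by metis
    have "g' a < g' b" using mono a b by simp
    moreover have "(1 - t) * t * (y - x) > 0" using t xy by simp
    ultimately have "(1 - t) * t * (y - x) * g' a < (1 - t) * t * (y - x) * g' b"
      by (rule mult_strict_left_mono)
    then have "(1 - t) * (g z - g x) < t * (g y - g z)"
      unfolding a(4) b(4) zx yz by (simp add: algebra_simps)
    then show ?thesis unfolding z_def[symmetric] by (simp add: algebra_simps)
  qed
  show ?thesis unfolding strict_convex_on_def
  proof (intro ballI allI impI)
    fix x y t :: real assume xy: "x \<in> S" "y \<in> S" "x \<noteq> y" and t: "0 < t \<and> t < 1"
    then consider "x < y" | "y < x" by linarith
    then show "g ((1 - t) * x + t * y) < (1 - t) * g x + t * g y"
    proof cases
      case 2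
      with ordered[of y x "1 - t"] show ?thesis using xy t by (simp add: algebra_simps)
    qed (use ordered xy t in auto)
  qed
qed

lemma strict_convex_on_if_second_deriv_pos:
  fixes g g' g'' :: "real \<Rightarrow> real"
  assumes S: "convex S"
    and g: "\<And>x. x \<in> S \<Longrightarrow> (g has_real_derivative g' x) (at x)"
    and g': "\<And>x. x \<in> S \<Longrightarrow> (g' has_real_derivative g'' x) (at x)"
    and pos: "\<And>x. x \<in> S \<Longrightarrow> g'' x > 0"
  shows "strict_convex_on S g"
proof (rule strict_convex_on_if_deriv_increasing[OF S g])
  fix x y assume "x \<in> S" "y \<in> S" "x < y"
  then have "{x..y} \<subseteq> S" by (rule atMostAtLeast_subset_convex[OF S])
  then show "g' x < g' y"
    using DERIV_pos_imp_increasing[OF \<open>x < y\<close>, of g'] g' pos by force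
qed

(* The second derivative of c * ln f is c (f f'' - f'^2) / f^2, so c * ln f is strictly
   convex where c times the Laguerre expression f f'' - f'^2 is positive. *)
lemma strict_convex_on_scaled_ln:
  fixes f f' f'' :: "real \<Rightarrow> real" and c :: real
  assumes S: "convex S"
    and f: "\<And>x. x \<in> S \<Longrightarrow> (f has_real_derivative f' x) (at x)"
    and f': "\<And>x. x \<in> S \<Longrightarrow> (f' has_real_derivative f'' x) (at x)"
    and pos: "\<And>x. x \<in> S \<Longrightarrow> f x > 0"
    and sign: "\<And>x. x \<in> S \<Longrightarrow> c * (f x * f'' x - f' x ^ 2) > 0"
  shows "strict_convex_on S (\<lambda>x. c * ln (f x))"
proof (rule strict_convex_on_if_second_deriv_pos[OF S])
  fix x assume x: "x \<in> S"
  show "((\<lambda>x. c * ln (f x)) has_real_derivative c * (f' x / f x)) (at x)"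
    using DERIV_cmult[OF DERIV_chain2[OF DERIV_ln_divide[OF pos[OF x]] f[OF x]], of c] by simp
  show "((\<lambda>x. c * (f' x / f x)) has_real_derivative c * ((f'' x * f x - f' x * f' x) / (f x * f x))) (at x)"
    using DERIV_cmult[OF DERIV_divide[OF f'[OF x] f[OF x]], of c] pos[OF x] by simp
  have "c * ((f'' x * f x - f' x * f' x) / (f x * f x)) = c * (f x * f'' x - f' x ^ 2) / (f x * f x)"
    by (simp add: power2_eq_square algebra_simps)
  also have "\<dots> > 0" using sign[OF x] pos[OF x] by (intro divide_pos_pos) simp_all
  finally show "c * ((f'' x * f x - f' x * f' x) / (f x * f x)) > 0" .
qed

lemma strict_log_concave_on_if_laguerre_neg:
  fixes f f' f'' :: "real \<Rightarrow> real"
  assumes "convex S"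
    and "\<And>x. x \<in> S \<Longrightarrow> (f has_real_derivative f' x) (at x)"
    and "\<And>x. x \<in> S \<Longrightarrow> (f' has_real_derivative f'' x) (at x)"
    and pos: "\<And>x. x \<in> S \<Longrightarrow> f x > 0"
    and laguerre_neg: "\<And>x. x \<in> S \<Longrightarrow> f x * f'' x - f' x ^ 2 < 0"
  shows "strict_log_concave_on S f"
  using strict_convex_on_scaled_ln[OF assms(1-4), of "-1"] laguerre_neg pos
  unfolding strict_log_concave_on_def by simp

lemma strict_log_convex_on_if_laguerre_pos:
  fixes f f' f'' :: "real \<Rightarrow> real"
  assumes "convex S"
    and "\<And>x. x \<in> S \<Longrightarrow> (f has_real_derivative f' x) (at x)"
    and "\<And>x. x \<in> S \<Longrightarrow> (f' has_real_derivative f'' x) (at x)"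
    and pos: "\<And>x. x \<in> S \<Longrightarrow> f x > 0"
    and laguerre_pos: "\<And>x. x \<in> S \<Longrightarrow> f x * f'' x - f' x ^ 2 > 0"
  shows "strict_log_convex_on S f"
  using strict_convex_on_scaled_ln[OF assms(1-4), of 1] laguerre_pos pos
  unfolding strict_log_convex_on_def by simp

lemma fps_conv_radius_deriv_infty:
  fixes G :: "'a :: {banach, real_normed_field} fps"
  shows "fps_conv_radius G = \<infinity> \<Longrightarrow> fps_conv_radius (fps_deriv G) = \<infinity>"
  using fps_conv_radius_deriv[of G] by simp

lemma fps_conv_radius_mult_infty:
  "fps_conv_radius G = \<infinity> \<Longrightarrow> fps_conv_radius H = \<infinity> \<Longrightarrow> fps_conv_radius (G * H) = \<infinity>"
  using fps_conv_radius_mult[of G H] by simp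

lemma fps_conv_radius_diff_infty:
  "fps_conv_radius G = \<infinity> \<Longrightarrow> fps_conv_radius H = \<infinity> \<Longrightarrow> fps_conv_radius (G - H) = \<infinity>"
  using fps_conv_radius_diff[of G H] by simp

(* sum_j (j-1)/j! = e - e = 0, proved by telescoping 1/(j-1)! - 1/j!. *)
lemma sums_pred_over_fact: "(\<lambda>j. (real j - 1) / fact j) sums 0"
proof -
  have "(\<lambda>n. - inverse (fact n) :: real) \<longlonglongrightarrow> - 0"
    using summable_LIMSEQ_zero[OF summable_exp[of 1]] by (intro tendsto_minus) simp
  then have "(\<lambda>n. (- inverse (fact (Suc n))) - (- inverse (fact n)) :: real) sums (0 - (- 1))"
    using telescope_sums[of "\<lambda>n. - inverse (fact n) :: real" 0] by simp
  moreover have "(- inverse (fact (Suc n))) - (- inverse (fact n)) = (real (Suc n) - 1) / fact (Suc n)" for n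
    by (simp add: divide_simps)
  ultimately have "(\<lambda>n. (real (Suc n) - 1) / fact (Suc n)) sums 1" by simp
  then show ?thesis using sums_Suc_iff[of "\<lambda>j. (real j - 1) / fact j" 1] by simp
qed

definition bessel_coeff :: "real \<Rightarrow> nat \<Rightarrow> real" where
  "bessel_coeff \<nu> n = (1/4)^n / (pochhammer (\<nu> + 1) n * fact n)"

lemma bessel_coeff_pos: "\<nu> > -1 \<Longrightarrow> bessel_coeff \<nu> n > 0"
  unfolding bessel_coeff_def by (intro divide_pos_pos mult_pos_pos pochhammer_pos) auto

lemma bessel_coeff_Suc:
  "\<nu> > -1 \<Longrightarrow> bessel_coeff \<nu> (Suc n) = bessel_coeff \<nu> n / (4 * (real n + 1) * (\<nu> + real n + 1))"
  unfolding bessel_coeff_def using pochhammer_pos[of "\<nu> + 1" n]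
  by (simp add: pochhammer_Suc field_simps)

lemma summable_bessel_coeff:
  assumes "\<nu> > -1"
  shows "summable (\<lambda>n. bessel_coeff \<nu> n * y ^ n)"
proof (rule summable_ratio_test[where c = "1/2" and N = "nat \<lceil>\<bar>y\<bar>\<rceil>"])
  fix n assume "nat \<lceil>\<bar>y\<bar>\<rceil> \<le> n"
  then have y: "\<bar>y\<bar> \<le> real n" by linarith
  define d where "d = 4 * (real n + 1) * (\<nu> + real n + 1)"
  have "2 * \<bar>y\<bar> \<le> d"
  proof -
    have "2 * \<bar>y\<bar> \<le> 4 * \<nu> + 4 * real n + 4" using y assms by linarith
    also have "\<dots> = 4 * (\<nu> + real n + 1) * 1" by simp
    also have "\<dots> \<le> 4 * (\<nu> + real n + 1) * (real n + 1)"
      using assms by (intro mult_left_mono) auto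
    also have "\<dots> = d" unfolding d_def by (simp add: algebra_simps)
    finally show ?thesis .
  qed
  moreover have d_pos: "d > 0" unfolding d_def using assms by simp
  ultimately have ratio: "\<bar>y\<bar> / d \<le> 1/2" by (simp add: divide_le_eq)
  have "bessel_coeff \<nu> (Suc n) = bessel_coeff \<nu> n / d"
    unfolding d_def by (rule bessel_coeff_Suc[OF assms])
  then have "norm (bessel_coeff \<nu> (Suc n) * y ^ Suc n) = norm (bessel_coeff \<nu> n * y ^ n) * (\<bar>y\<bar> / d)"
    using d_pos by (simp add: abs_mult power_abs)
  also have "\<dots> \<le> norm (bessel_coeff \<nu> n * y ^ n) * (1/2)"
    by (intro mult_left_mono ratio) simp
  finally show "norm (bessel_coeff \<nu> (Suc n) * y ^ Suc n) \<le> 1/2 * norm (bessel_coeff \<nu> n * y ^ n)"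
    by simp
qed simp

definition bessel_fps :: "real \<Rightarrow> real fps" where
  "bessel_fps \<nu> = Abs_fps (\<lambda>k. if even k then bessel_coeff \<nu> (k div 2) else 0)"

lemma bessel_fps_sums:
  assumes "\<nu> > -1"
  shows "(\<lambda>k. fps_nth (bessel_fps \<nu>) k * x ^ k) sums Ical \<nu> x"
proof -
  have "(\<lambda>n. bessel_coeff \<nu> n * (x^2) ^ n) sums Ical \<nu> x"
    using summable_sums[OF summable_bessel_coeff[OF assms]]
    by (simp add: Ical_def bessel_coeff_def power_mult)
  then have "(\<lambda>n. fps_nth (bessel_fps \<nu>) (2*n) * x ^ (2*n)) sums Ical \<nu> x"
    by (simp add: bessel_fps_def power_mult)
  then show ?thesis
    by (subst (asm) sums_mono_reindex) (auto simp: strict_mono_def bessel_fps_def elim!: oddE)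
qed

lemma bessel_fps_radius: "\<nu> > -1 \<Longrightarrow> fps_conv_radius (bessel_fps \<nu>) = \<infinity>"
  unfolding fps_conv_radius_def
  by (rule conv_radius_inftyI'') (use bessel_fps_sums in \<open>auto simp: sums_iff\<close>)

lemma Ical_eq_eval_fps: "\<nu> > -1 \<Longrightarrow> Ical \<nu> = eval_fps (bessel_fps \<nu>)"
  by (rule ext) (use bessel_fps_sums in \<open>auto simp: eval_fps_def sums_iff\<close>)

definition dbessel_fps :: "real \<Rightarrow> real fps" where
  "dbessel_fps \<nu> = fps_deriv (bessel_fps \<nu>)"

lemma dbessel_nth_even: "fps_nth (dbessel_fps \<nu>) (2*k) = 0"
  by (simp add: dbessel_fps_def bessel_fps_def)

lemma dbessel_nth_odd: "fps_nth (dbessel_fps \<nu>) (2*k+1) = (2 * real k + 2) * bessel_coeff \<nu> (Suc k)"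
proof -
  have "2*k + 1 + 1 = 2 * Suc k" by simp
  then show ?thesis by (simp add: dbessel_fps_def bessel_fps_def)
qed

definition euler :: "'a::comm_ring_1 fps \<Rightarrow> 'a fps" where
  "euler G = fps_X * fps_deriv G"

lemma euler_nth [simp]: "fps_nth (euler G) n = of_nat n * fps_nth G n"
  by (cases n) (simp_all add: euler_def)

lemma euler_mult: "euler (G * H) = euler G * H + G * euler H"
  by (simp add: euler_def algebra_simps)

lemma dbessel_ode_nth:
  assumes nu: "\<nu> > -1"
  shows "(real (m+2) - 1) * (real (m+2) + 2*\<nu> + 1) * fps_nth (dbessel_fps \<nu>) (m+2)
         = fps_nth (dbessel_fps \<nu>) m"
proof (cases "even m")
  case True
  then obtain k where "m = 2*k" by (rule evenE)
  moreover have "2*k + 2 = 2 * Suc k" by simp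
  ultimately show ?thesis using dbessel_nth_even[of \<nu> k] dbessel_nth_even[of \<nu> "Suc k"] by simp
next
  case False
  then obtain k where m: "m = 2*k + 1" by (rule oddE)
  have "4 * (real k + 2) * (\<nu> + real k + 2) \<noteq> 0" using nu by simp
  moreover have "bessel_coeff \<nu> (Suc (Suc k)) = bessel_coeff \<nu> (Suc k) / (4 * (real k + 2) * (\<nu> + real k + 2))"
    using bessel_coeff_Suc[OF nu, of "Suc k"] by (simp add: add_ac)
  ultimately have rec: "bessel_coeff \<nu> (Suc (Suc k)) * (4 * (real k + 2) * (\<nu> + real k + 2)) = bessel_coeff \<nu> (Suc k)"
    by simp
  have idx: "m + 2 = 2 * Suc k + 1" using m by simp
  have "(real (m+2) - 1) * (real (m+2) + 2*\<nu> + 1) * fps_nth (dbessel_fps \<nu>) (m+2)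
      = (2 * real k + 2) * (bessel_coeff \<nu> (Suc (Suc k)) * (4 * (real k + 2) * (\<nu> + real k + 2)))"
    unfolding idx dbessel_nth_odd by (simp add: algebra_simps)
  also have "\<dots> = fps_nth (dbessel_fps \<nu>) m"
    unfolding rec m dbessel_nth_odd by simp
  finally show ?thesis .
qed

lemma dbessel_ode:
  assumes "\<nu> > -1"
  shows "euler (euler (dbessel_fps \<nu>)) = fps_const (2*\<nu>+1) * dbessel_fps \<nu> + fps_X^2 * dbessel_fps \<nu>
           - fps_const (2*\<nu>) * euler (dbessel_fps \<nu>)"
proof (rule fps_ext)
  fix n :: nat
  consider "n = 0" | "n = 1" | "n \<ge> 2" by linarith
  then show "fps_nth (euler (euler (dbessel_fps \<nu>))) n = fps_nth (fps_const (2*\<nu>+1) * dbessel_fps \<nu>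
      + fps_X^2 * dbessel_fps \<nu> - fps_const (2*\<nu>) * euler (dbessel_fps \<nu>)) n"
  proof cases
    case 1 then show ?thesis using dbessel_nth_even[of \<nu> 0] by simp
  next
    case 3
    then obtain m where "n = m + 2" by (metis add.commute le_add_diff_inverse)
    then show ?thesis using dbessel_ode_nth[OF assms, of m]
      by (simp add: fps_X_power_mult_nth algebra_simps power2_eq_square)
  qed (simp_all add: fps_X_power_mult_nth algebra_simps)
qed

definition A_fps :: "real \<Rightarrow> real fps" where
  "A_fps \<nu> = dbessel_fps \<nu> * dbessel_fps \<nu>"
definition B_fps :: "real \<Rightarrow> real fps" where
  "B_fps \<nu> = dbessel_fps \<nu> * euler (dbessel_fps \<nu>)"
definition C_fps :: "real \<Rightarrow> real fps" where
  "C_fps \<nu> = euler (dbessel_fps \<nu>) * euler (dbessel_fps \<nu>)"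
definition laguerre_fps :: "real \<Rightarrow> real fps" where
  "laguerre_fps \<nu> = dbessel_fps \<nu> * fps_deriv (fps_deriv (dbessel_fps \<nu>))
                    - fps_deriv (dbessel_fps \<nu>) * fps_deriv (dbessel_fps \<nu>)"

lemma euler_A: "euler (A_fps \<nu>) = B_fps \<nu> + B_fps \<nu>"
  by (simp add: A_fps_def B_fps_def euler_mult algebra_simps)

lemma euler_B:
  "\<nu> > -1 \<Longrightarrow> euler (B_fps \<nu>) = C_fps \<nu> + fps_const (2*\<nu>+1) * A_fps \<nu> + fps_X^2 * A_fps \<nu>
                                 - fps_const (2*\<nu>) * B_fps \<nu>"
  by (simp add: A_fps_def B_fps_def C_fps_def euler_mult dbessel_ode algebra_simps)

lemma euler_C:
  assumes "\<nu> > -1"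
  shows "euler (C_fps \<nu>) = fps_const (2*\<nu>+1) * (B_fps \<nu> + B_fps \<nu>) + fps_X^2 * (B_fps \<nu> + B_fps \<nu>)
                            - fps_const (4*\<nu>) * C_fps \<nu>"
proof -
  have "fps_const (4*\<nu>) = fps_const (2*\<nu>) + (fps_const (2*\<nu>) :: real fps)"
    by (simp flip: fps_const_add)
  then show ?thesis
    by (simp add: B_fps_def C_fps_def euler_mult dbessel_ode[OF assms] algebra_simps)
qed

lemma laguerre_fps_X2:
  assumes "\<nu> > -1"
  shows "fps_X^2 * laguerre_fps \<nu> = fps_const (2*\<nu>+1) * A_fps \<nu> + fps_X^2 * A_fps \<nu>
                                   - fps_const (2*\<nu>+1) * B_fps \<nu> - C_fps \<nu>"
proof -
  let ?F = "dbessel_fps \<nu>"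
  have "euler (euler ?F) = fps_X * fps_deriv ?F + fps_X^2 * fps_deriv (fps_deriv ?F)"
    by (simp add: euler_def algebra_simps power2_eq_square)
  then have lhs: "fps_X^2 * laguerre_fps \<nu> = ?F * euler (euler ?F) - ?F * euler ?F - euler ?F * euler ?F"
    by (simp add: laguerre_fps_def euler_def algebra_simps power2_eq_square)
  have split: "fps_const (2*\<nu>+1) = fps_const (2*\<nu>) + (1 :: real fps)"
    by (simp flip: fps_const_add)
  show ?thesis unfolding lhs dbessel_ode[OF assms] split
    by (simp add: A_fps_def B_fps_def C_fps_def algebra_simps)
qed

(* Elimination of B_n, C_n and B_(n-2) from the coefficient equations at n and n-2
   (An, Bn, Cn stand for A_n, B_n, C_n and Am, Bm for A_(n-2), B_(n-2)). *)
lemma eliminate_BC_recurrence: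
  fixes n \<nu> An Bn Cn Am Bm :: real
  assumes "n * An = 2 * Bn"
    and "n * Bn = Cn + (2*\<nu>+1) * An + Am - 2*\<nu> * Bn"
    and "n * Cn = 2 * (2*\<nu>+1) * Bn + 2 * Bm - 4*\<nu> * Cn"
    and "(n-2) * Am = 2 * Bm"
  shows "An * (n-2) * (n+2*\<nu>) * (n+4*\<nu>+2) = 4 * (n+2*\<nu>-1) * Am"
  using assms by algebra

(* The same elimination, applied to the combination of A, B, C that equals Lambda_(n-2). *)
lemma eliminate_BC_laguerre:
  fixes n \<nu> An Bn Cn Am Bm :: real
  assumes "n * An = 2 * Bn"
    and "n * Bn = Cn + (2*\<nu>+1) * An + Am - 2*\<nu> * Bn"
    and "n * Cn = 2 * (2*\<nu>+1) * Bn + 2 * Bm - 4*\<nu> * Cn"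
    and "(n-2) * Am = 2 * Bm"
  shows "((2*\<nu>+1) * An + Am - (2*\<nu>+1) * Bn - Cn) * 2 * (n+2*\<nu>-1) = (n-4) * (2*\<nu>+1) * An"
  using assms by algebra

context
  fixes \<nu> :: real
  assumes nu: "\<nu> > -1"
begin

abbreviation F :: "nat \<Rightarrow> real" where "F n \<equiv> fps_nth (dbessel_fps \<nu>) n"
abbreviation A :: "nat \<Rightarrow> real" where "A n \<equiv> fps_nth (A_fps \<nu>) n"
abbreviation B :: "nat \<Rightarrow> real" where "B n \<equiv> fps_nth (B_fps \<nu>) n"
abbreviation C :: "nat \<Rightarrow> real" where "C n \<equiv> fps_nth (C_fps \<nu>) n"
abbreviation L :: "nat \<Rightarrow> real" where "L n \<equiv> fps_nth (laguerre_fps \<nu>) n"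

lemma A_coeff_eq: "real n * A n = 2 * B n"
  using arg_cong[OF euler_A[of \<nu>], of "\<lambda>G. fps_nth G n"] by simp

lemma B_coeff_eq: "real n * B n = C n + (2*\<nu>+1) * A n + (if n < 2 then 0 else A (n-2)) - 2*\<nu> * B n"
  using arg_cong[OF euler_B[OF nu], of "\<lambda>G. fps_nth G n"] by (simp add: fps_X_power_mult_nth)

lemma C_coeff_eq: "real n * C n = 2*(2*\<nu>+1) * B n + (if n < 2 then 0 else 2 * B (n-2)) - 4*\<nu> * C n"
  using arg_cong[OF euler_C[OF nu], of "\<lambda>G. fps_nth G n"] by (simp add: fps_X_power_mult_nth)

lemma L_coeff_eq: "L k = (2*\<nu>+1) * A (k+2) + A k - (2*\<nu>+1) * B (k+2) - C (k+2)"
  using arg_cong[OF laguerre_fps_X2[OF nu], of "\<lambda>G. fps_nth G (k+2)"] by (simp add: fps_X_power_mult_nth)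

lemma A_recurrence:
  "A (k+2) * real k * (real k + 2*\<nu> + 2) * (real k + 4*\<nu> + 4) = 4 * (real k + 2*\<nu> + 1) * A k"
proof -
  have "A (k+2) * (real (k+2) - 2) * (real (k+2) + 2*\<nu>) * (real (k+2) + 4*\<nu> + 2) = 4 * (real (k+2) + 2*\<nu> - 1) * A k"
    by (rule eliminate_BC_recurrence[where Bn = "B (k+2)" and Cn = "C (k+2)" and Bm = "B k"])
       (use A_coeff_eq[of "k+2"] B_coeff_eq[of "k+2"] C_coeff_eq[of "k+2"] A_coeff_eq[of k] in simp_all)
  then show ?thesis by (simp add: algebra_simps)
qed

lemma L_coeff_A:
  assumes "k \<ge> 1"
  shows "L k = (real k - 2) * (2*\<nu>+1) * A (k+2) / (2 * (real k + 2*\<nu> + 1))"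
proof -
  have "L k * 2 * (real (k+2) + 2*\<nu> - 1) = (real (k+2) - 4) * (2*\<nu>+1) * A (k+2)"
    unfolding L_coeff_eq
    by (rule eliminate_BC_laguerre[where Bn = "B (k+2)" and Cn = "C (k+2)" and Bm = "B k"])
       (use A_coeff_eq[of "k+2"] B_coeff_eq[of "k+2"] C_coeff_eq[of "k+2"] A_coeff_eq[of k] in simp_all)
  moreover have "real k + 2*\<nu> + 1 > 0" using nu assms by simp
  ultimately show ?thesis by (simp add: field_simps)
qed

lemma F_even: "even n \<Longrightarrow> F n = 0"
  using dbessel_nth_even by (auto elim!: evenE)

lemma F_odd_pos: "F (2*k+1) > 0"
  using dbessel_nth_odd[of \<nu> k] bessel_coeff_pos[OF nu] by simp

lemma F_nonneg: "F n \<ge> 0"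
proof (cases "even n")
  case False
  then obtain k where "n = 2*k+1" by (rule oddE)
  then show ?thesis using F_odd_pos[of k] by simp
qed (simp add: F_even)

lemma A_odd:
  assumes "odd n"
  shows "A n = 0"
  unfolding A_fps_def fps_mult_nth
proof (intro sum.neutral ballI)
  fix i assume "i \<in> {0..n}"
  then have "even i \<or> even (n - i)" using assms by (auto simp: even_diff_nat)
  then show "F i * F (n - i) = 0" using F_even by auto
qed

lemma A_even_pos: "A (2*k+2) > 0"
  unfolding A_fps_def fps_mult_nth
proof (rule sum_pos2[where i = 1])
  show "0 < F 1 * F (2*k + 2 - 1)" using F_odd_pos[of 0] F_odd_pos[of k] by simp
qed (auto intro!: mult_nonneg_nonneg F_nonneg)

lemma A_2_pos: "A 2 > 0"
  using A_even_pos[of 0] by (simp add: numeral_2_eq_2)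

lemma A_nonneg: "A n \<ge> 0"
  unfolding A_fps_def fps_mult_nth by (intro sum_nonneg mult_nonneg_nonneg F_nonneg)

lemma L_0: "L 0 = - A 2"
  using F_even[of 0] F_even[of 2]
  by (simp add: laguerre_fps_def A_fps_def fps_mult_nth numeral_2_eq_2 power2_eq_square)

lemma L_odd: "odd k \<Longrightarrow> L k = 0"
  using L_coeff_A[of k] A_odd[of "k+2"] by (cases k) auto

lemma L_nonpos:
  assumes "2*\<nu>+1 \<le> 0" and "k \<ge> 1"
  shows "L k \<le> 0"
proof (cases "k = 1")
  case False
  then have "(real k - 2) * (2*\<nu>+1) * A (k+2) \<le> 0"
    using assms A_nonneg[of "k+2"] by (intro mult_nonpos_nonneg mult_nonneg_nonpos) auto
  moreover have "2 * (real k + 2*\<nu> + 1) > 0" using nu assms by simp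
  ultimately show ?thesis unfolding L_coeff_A[OF assms(2)] by (rule divide_nonpos_pos)
qed (simp add: L_odd)

lemma L_nonneg:
  assumes "2*\<nu>+1 \<ge> 0" and "k \<ge> 1"
  shows "L k \<ge> 0"
proof (cases "k = 1")
  case False
  then have "(real k - 2) * (2*\<nu>+1) * A (k+2) \<ge> 0"
    using assms A_nonneg[of "k+2"] by (intro mult_nonneg_nonneg) auto
  moreover have "2 * (real k + 2*\<nu> + 1) > 0" using nu assms by simp
  ultimately show ?thesis unfolding L_coeff_A[OF assms(2)] by (rule divide_nonneg_pos)
qed (simp add: L_odd)

lemma L_4_pos: "2*\<nu>+1 > 0 \<Longrightarrow> L 4 > 0"
  using L_coeff_A[of 4] A_even_pos[of 2] nu by simp

context
  assumes pos: "2*\<nu>+1 > 0"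
begin

(* The normalised even coefficients V_j, chosen so that Lambda_(2j) x0^(2j) = (j-1) V_j,
   where x0^2 = 2nu+6. *)
definition V :: "nat \<Rightarrow> real" where
  "V j = (2*\<nu>+1) * A (2*j+2) * (2*\<nu>+6)^j / (2*real j + 2*\<nu> + 1)"

lemma V_0: "V 0 = A 2"
  using pos by (simp add: V_def numeral_2_eq_2)

lemma V_pos: "V j > 0"
  unfolding V_def using pos A_even_pos[of j] nu by simp

lemma V_step:
  "V (Suc j) * real (Suc j) * ((real j + \<nu> + 2) * (real j + 2*\<nu> + 3))
   = V j * ((2*real j + 2*\<nu> + 1) * (\<nu> + 3))"
proof -
  define a where "a = A (2*j+2)"
  define a' where "a' = A (2*j+4)"
  define s where "s = 2*\<nu> + 6"
  define D where "D = 2*real j + 2*\<nu> + 1"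
  define D' where "D' = 2*real j + 2*\<nu> + 3"
  have "D > 0" "D' > 0" unfolding D_def D'_def using pos by (simp_all add: add_pos_nonneg)
  have rec: "a' * ((2*real j + 2) * (2*real j + 2*\<nu> + 4) * (2*real j + 4*\<nu> + 6)) = 4 * D' * a"
  proof -
    have idx: "2*j+2+2 = 2*j+4" by simp
    show ?thesis using A_recurrence[of "2*j+2", unfolded idx, folded a_def a'_def]
      unfolding D'_def by (simp add: algebra_simps)
  qed
  have V_j: "V j * D = (2*\<nu>+1) * a * s^j"
    unfolding V_def a_def[symmetric] s_def[symmetric] D_def[symmetric] using \<open>D > 0\<close> by simp
  have V_Suc: "V (Suc j) * D' = (2*\<nu>+1) * a' * s^j * s"
  proof -
    have idx: "2 * Suc j + 2 = 2*j+4" by simp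
    have den: "2 * real (Suc j) + 2*\<nu> + 1 = D'" unfolding D'_def by simp
    show ?thesis unfolding V_def idx den a'_def[symmetric] s_def[symmetric]
      using \<open>D' > 0\<close> by (simp add: power_Suc mult_ac)
  qed
  have "V (Suc j) * real (Suc j) * ((real j + \<nu> + 2) * (real j + 2*\<nu> + 3)) * (8 * D')
        = (V (Suc j) * D') * (8 * (real j + 1) * ((real j + \<nu> + 2) * (real j + 2*\<nu> + 3)))"
    by (simp add: algebra_simps)
  also have "\<dots> = (2*\<nu>+1) * s^j * s * (a' * ((2*real j + 2) * (2*real j + 2*\<nu> + 4) * (2*real j + 4*\<nu> + 6)))"
    unfolding V_Suc by (simp add: algebra_simps)
  also have "\<dots> = (V j * D) * (s * 4 * D')"
    unfolding rec V_j by (simp add: algebra_simps)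
  also have "\<dots> = V j * ((2*real j + 2*\<nu> + 1) * (\<nu> + 3)) * (8 * D')"
    unfolding s_def D_def by (simp add: algebra_simps)
  finally show ?thesis using \<open>D' > 0\<close> by simp
qed

(* V_j j! is strictly decreasing: the ratio (2j+2nu+1)(nu+3) / ((j+nu+2)(j+2nu+3)) is < 1. *)
lemma V_ratio: "V (Suc j) * real (Suc j) < V j"
proof -
  have "(2*real j + 2*\<nu> + 1) * (\<nu> + 3) < (real j + \<nu> + 2) * (real j + 2*\<nu> + 3)"
  proof -
    have "(real j + \<nu> + 2) * (real j + 2*\<nu> + 3) - (2*real j + 2*\<nu> + 1) * (\<nu> + 3)
          = (real j - 1) ^ 2 + (\<nu> + 1) * real j + 2"
      by (simp add: algebra_simps power2_eq_square)
    moreover have "(\<nu> + 1) * real j \<ge> 0" using nu by simp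
    ultimately show ?thesis by (smt (verit) zero_le_power2)
  qed
  then have "V (Suc j) * real (Suc j) * ((real j + \<nu> + 2) * (real j + 2*\<nu> + 3))
             < V j * ((real j + \<nu> + 2) * (real j + 2*\<nu> + 3))"
    unfolding V_step using V_pos[of j] by simp
  then show ?thesis by (rule mult_right_less_imp_less) (use nu in simp)
qed

lemma V_fact_bound: "j \<ge> 1 \<Longrightarrow> V j * fact j < A 2"
proof (induction j rule: dec_induct)
  case base
  then show ?case using V_ratio[of 0] V_0 by simp
next
  case (step j)
  have "V (Suc j) * fact (Suc j) = (V (Suc j) * real (Suc j)) * fact j" by simp
  also have "\<dots> < V j * fact j" using V_ratio[of j] by (intro mult_strict_right_mono) auto
  finally show ?case using step.IH by linarith
qed

lemma L_even_V: "L (2*j) * (2*\<nu>+6)^j = (real j - 1) * V j"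
proof (cases "j = 0")
  case True
  then show ?thesis using L_0 V_0 by simp
next
  case False
  then have L_eq: "L (2*j) = (2*real j - 2) * (2*\<nu>+1) * A (2*j+2) / (2 * (2*real j + 2*\<nu> + 1))"
    using L_coeff_A[of "2*j"] by simp
  moreover have "2*real j + 2*\<nu> + 1 > 0" using pos by (simp add: add_pos_nonneg)
  ultimately show ?thesis unfolding L_eq V_def by (simp add: field_simps)
qed

lemma L_even_bound_strict:
  assumes "j \<ge> 2"
  shows "L (2*j) * (2*\<nu>+6)^j < A 2 * ((real j - 1) / fact j)"
proof -
  have "(real j - 1) * V j < (real j - 1) * (A 2 / fact j)"
    using V_fact_bound[of j] assms by (intro mult_strict_left_mono) (auto simp: field_simps)
  then show ?thesis unfolding L_even_V by (simp add: mult.commute)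
qed

lemma L_even_bound: "L (2*j) * (2*\<nu>+6)^j \<le> A 2 * ((real j - 1) / fact j)"
proof -
  consider "j = 0" | "j = 1" | "j \<ge> 2" by linarith
  then show ?thesis
    by cases (use L_0 L_even_V[of 1] nu L_even_bound_strict[of j] in auto)
qed

end

abbreviation dI :: "real \<Rightarrow> real" where "dI \<equiv> eval_fps (dbessel_fps \<nu>)"
abbreviation d2I :: "real \<Rightarrow> real" where "d2I \<equiv> eval_fps (fps_deriv (dbessel_fps \<nu>))"
abbreviation d3I :: "real \<Rightarrow> real" where "d3I \<equiv> eval_fps (fps_deriv (fps_deriv (dbessel_fps \<nu>)))"
abbreviation laguerre :: "real \<Rightarrow> real" where "laguerre \<equiv> eval_fps (laguerre_fps \<nu>)"

lemma radius_dI: "fps_conv_radius (dbessel_fps \<nu>) = \<infinity>"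
  unfolding dbessel_fps_def by (intro fps_conv_radius_deriv_infty bessel_fps_radius nu)

lemma radius_d2I: "fps_conv_radius (fps_deriv (dbessel_fps \<nu>)) = \<infinity>"
  by (intro fps_conv_radius_deriv_infty radius_dI)

lemma radius_d3I: "fps_conv_radius (fps_deriv (fps_deriv (dbessel_fps \<nu>))) = \<infinity>"
  by (intro fps_conv_radius_deriv_infty radius_d2I)

lemma radius_laguerre: "fps_conv_radius (laguerre_fps \<nu>) = \<infinity>"
  unfolding laguerre_fps_def
  by (intro fps_conv_radius_diff_infty fps_conv_radius_mult_infty radius_dI radius_d2I radius_d3I)

lemma deriv_Ical: "deriv (Ical \<nu>) = dI"
proof
  fix x
  show "deriv (Ical \<nu>) x = dI x"
    unfolding Ical_eq_eval_fps[OF nu] dbessel_fps_def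
    by (rule eval_fps_deriv[symmetric]) (simp add: bessel_fps_radius[OF nu])
qed

lemma has_deriv_dI: "(dI has_real_derivative d2I x) (at x)"
  by (rule has_field_derivative_eval_fps) (simp add: radius_dI)

lemma has_deriv_d2I: "(d2I has_real_derivative d3I x) (at x)"
  by (rule has_field_derivative_eval_fps) (simp add: radius_d2I)

lemma laguerre_eq: "laguerre x = dI x * d3I x - d2I x ^ 2"
  unfolding laguerre_fps_def
  by (simp add: eval_fps_diff eval_fps_mult radius_dI radius_d2I radius_d3I
      fps_conv_radius_mult_infty power2_eq_square)

lemma laguerre_sums: "(\<lambda>k. L k * x ^ k) sums laguerre x"
  by (rule sums_eval_fps) (simp add: radius_laguerre)

(* I'_nu is positive on (0,oo): its coefficients are nonnegative and the linear one positive. *)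
lemma dI_pos: "x > 0 \<Longrightarrow> dI x > 0"
  unfolding eval_fps_def
proof (rule suminf_pos2[where i = 1])
  assume "x > 0"
  show "summable (\<lambda>n. fps_nth (dbessel_fps \<nu>) n * x ^ n)"
    by (rule summable_fps) (simp add: radius_dI)
  show "0 \<le> fps_nth (dbessel_fps \<nu>) n * x ^ n" for n
    using F_nonneg \<open>x > 0\<close> by simp
  show "0 < fps_nth (dbessel_fps \<nu>) 1 * x ^ 1"
    using F_odd_pos[of 0] \<open>x > 0\<close> by simp
qed

lemma deriv_Ical_log_concave:
  assumes "convex S" "S \<subseteq> {0<..}" "\<And>x. x \<in> S \<Longrightarrow> laguerre x < 0"
  shows "strict_log_concave_on S (deriv (Ical \<nu>))"
  unfolding deriv_Ical
  by (rule strict_log_concave_on_if_laguerre_neg[OF assms(1) has_deriv_dI has_deriv_d2I])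
     (use assms dI_pos laguerre_eq in auto)

lemma deriv_Ical_log_convex:
  assumes "convex S" "S \<subseteq> {0<..}" "\<And>x. x \<in> S \<Longrightarrow> laguerre x > 0"
  shows "strict_log_convex_on S (deriv (Ical \<nu>))"
  unfolding deriv_Ical
  by (rule strict_log_convex_on_if_laguerre_pos[OF assms(1) has_deriv_dI has_deriv_d2I])
     (use assms dI_pos laguerre_eq in auto)

(* Part (a): for nu <= -1/2 all Laguerre coefficients are <= 0 and Lambda_0 < 0. *)
lemma laguerre_neg:
  assumes "2*\<nu>+1 \<le> 0"
  shows "laguerre x < 0"
proof -
  have "L k * x ^ k \<le> (if k = 0 then L k * x ^ k else 0)" for k
  proof (cases "k = 0 \<or> odd k")
    case False
    then have "L k \<le> 0" "x ^ k \<ge> 0" using L_nonpos[OF assms, of k] by auto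
    then show ?thesis using False by (simp add: mult_nonpos_nonneg)
  qed (auto simp: L_odd)
  then have "laguerre x \<le> L 0 * x ^ 0"
    using sums_le[OF _ laguerre_sums sums_single[of 0 "\<lambda>k. L k * x ^ k"]] by blast
  then show ?thesis using L_0 A_2_pos by simp
qed

(* For nu > -1/2 the coefficients Lambda_k (k >= 1) are >= 0 and Lambda_4 > 0, so Lambda is
   strictly increasing on [0,oo) and eventually positive. *)
lemma laguerre_strict_mono:
  assumes "2*\<nu>+1 > 0" "0 \<le> x" "x < y"
  shows "laguerre x < laguerre y"
proof -
  have diff: "(\<lambda>k. L k * y ^ k - L k * x ^ k) sums (laguerre y - laguerre x)"
    by (rule sums_diff[OF laguerre_sums laguerre_sums])
  have "0 < suminf (\<lambda>k. L k * y ^ k - L k * x ^ k)"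
  proof (rule suminf_pos2[where i = 4])
    show "summable (\<lambda>k. L k * y ^ k - L k * x ^ k)" using diff by (simp add: sums_iff)
    show "0 \<le> L k * y ^ k - L k * x ^ k" for k
    proof (cases "k = 0")
      case False
      then have "L k \<ge> 0" using L_nonneg[of k] assms(1) by simp
      moreover have "x ^ k \<le> y ^ k" using assms by (intro power_mono) auto
      ultimately show ?thesis by (simp add: mult_left_mono)
    qed simp
    have "x ^ 4 < y ^ 4" using assms by (intro power_strict_mono) auto
    then show "0 < L 4 * y ^ 4 - L 4 * x ^ 4" using L_4_pos[OF assms(1)] by simp
  qed
  then show ?thesis using diff by (simp add: sums_iff)
qed

lemma laguerre_eventually_pos:
  assumes "2*\<nu>+1 > 0"
  obtains M where "M > 0" "laguerre M > 0"
proof -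
  define M where "M = A 2 / L 4 + 1"
  have L4: "L 4 > 0" using L_4_pos[OF assms] .
  have M1: "M \<ge> 1" unfolding M_def using L4 A_2_pos by simp
  have "L 4 * M \<le> L 4 * M ^ 4"
    using L4 M1 power_increasing[of 1 4 M] by simp
  moreover have "L 4 * M = A 2 + L 4" unfolding M_def using L4 by (simp add: field_simps)
  ultimately have big: "L 4 * M ^ 4 > A 2" using L4 by linarith
  have "(\<Sum>k\<in>{0,4}. L k * M ^ k) \<le> laguerre M"
    unfolding sums_unique[OF laguerre_sums]
  proof (rule sum_le_suminf)
    show "summable (\<lambda>k. L k * M ^ k)" using laguerre_sums by (simp add: sums_iff)
    show "0 \<le> L n * M ^ n" if "n \<in> - {0,4}" for n
      using that L_nonneg[of n] assms M1 by simp
  qed simp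
  then have "laguerre M > 0" using big L_0 by simp
  then show ?thesis using M1 by (intro that) simp_all
qed

(* Lambda(x0) < 0 at x0 = sqrt(2(nu+3)): the even terms are dominated by A_2 (j-1)/j!,
   strictly at j = 2, and these sum to zero. *)
lemma laguerre_at_turning_point:
  assumes pos: "2*\<nu>+1 > 0"
  shows "laguerre (sqrt (2 * (\<nu> + 3))) < 0"
proof -
  define x0 where "x0 = sqrt (2 * (\<nu> + 3))"
  define U where "U j = L (2*j) * (2*\<nu>+6) ^ j" for j
  define w where "w j = A 2 * ((real j - 1) / fact j)" for j
  have "L k * x0 ^ k = 0" if "k \<notin> range (\<lambda>j. 2*j)" for k
    using that L_odd[of k] by (auto elim!: evenE)
  then have "(\<lambda>j. L (2*j) * x0 ^ (2*j)) sums laguerre x0"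
    using sums_mono_reindex[of "\<lambda>j. 2*j" "\<lambda>k. L k * x0 ^ k"] laguerre_sums
    by (simp add: strict_mono_def)
  moreover have "x0 ^ (2*j) = (2*\<nu>+6) ^ j" for j
    unfolding x0_def power_mult using nu by simp
  ultimately have U_sums: "U sums laguerre x0" unfolding U_def by simp
  have w_sums: "w sums 0"
    unfolding w_def using sums_mult[OF sums_pred_over_fact, of "A 2"] by simp
  have "0 < suminf (\<lambda>j. w j - U j)"
  proof (rule suminf_pos2[where i = 2])
    show "summable (\<lambda>j. w j - U j)" using sums_diff[OF w_sums U_sums] by (simp add: sums_iff)
    show "0 \<le> w j - U j" for j
      using L_even_bound[OF pos, of j] unfolding U_def w_def by simp
    show "0 < w 2 - U 2" using L_even_bound_strict[OF pos, of 2] unfolding U_def w_def by simp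
  qed
  moreover have "suminf (\<lambda>j. w j - U j) = 0 - laguerre x0"
    using sums_diff[OF w_sums U_sums] by (simp add: sums_iff)
  ultimately show ?thesis unfolding x0_def by simp
qed

lemma laguerre_continuous: "continuous_on S laguerre"
  using continuous_on_eval_fps[of "laguerre_fps \<nu>"] radius_laguerre
  by (auto intro: continuous_on_subset)

lemma laguerre_neg_below_turning_point:
  assumes "0 \<le> x" "x < sqrt (2 * (\<nu> + 3))"
  shows "laguerre x < 0"
proof (cases "2*\<nu>+1 \<le> 0")
  case True
  then show ?thesis by (rule laguerre_neg)
next
  case False
  then have "laguerre x < laguerre (sqrt (2 * (\<nu> + 3)))" using laguerre_strict_mono assms by simp
  also have "\<dots> < 0" using laguerre_at_turning_point False by simp
  finally show ?thesis .
qed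

lemma laguerre_sign_change:
  assumes pos: "2*\<nu>+1 > 0"
  obtains x\<^sub>\<nu> where "sqrt (2 * (\<nu> + 3)) < x\<^sub>\<nu>"
    and "\<And>x. 0 \<le> x \<Longrightarrow> x < x\<^sub>\<nu> \<Longrightarrow> laguerre x < 0"
    and "\<And>x. x\<^sub>\<nu> < x \<Longrightarrow> laguerre x > 0"
proof -
  define x0 where "x0 = sqrt (2 * (\<nu> + 3))"
  have "x0 \<ge> 0" unfolding x0_def using nu by simp
  have neg: "laguerre x0 < 0" unfolding x0_def by (rule laguerre_at_turning_point[OF pos])
  obtain M where M: "M > 0" "laguerre M > 0" using laguerre_eventually_pos[OF pos] by blast
  have "x0 < M"
  proof (rule ccontr)
    assume "\<not> x0 < M"
    then have "laguerre M \<le> laguerre x0"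
      using laguerre_strict_mono[OF pos, of M x0] M by (cases "M = x0") auto
    then show False using M neg by simp
  qed
  then obtain z where "x0 \<le> z" and zero: "laguerre z = 0"
    using IVT'[of laguerre x0 0 M] neg M laguerre_continuous by force
  moreover have "z \<noteq> x0" using neg zero by auto
  ultimately have "x0 < z" by simp
  show ?thesis
  proof (rule that[of z])
    show "sqrt (2 * (\<nu> + 3)) < z" using \<open>x0 < z\<close> unfolding x0_def .
    show "laguerre x < 0" if "0 \<le> x" "x < z" for x
      using laguerre_strict_mono[OF pos that] zero by simp
    show "laguerre x > 0" if "z < x" for x
      using laguerre_strict_mono[OF pos _ that] zero \<open>x0 \<ge> 0\<close> \<open>x0 < z\<close> by simp
  qed
qed

end

theorem theorem1:
  shows "(\<forall>\<nu>::real. -1 < \<nu> \<and> \<nu> \<le> -1/2 \<longrightarrow>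
            strict_log_concave_on {0<..} (deriv (Ical \<nu>)))
       \<and> (\<forall>\<nu>::real. -1 < \<nu> \<longrightarrow>
            strict_log_concave_on {0<..<sqrt (2 * (\<nu> + 3))} (deriv (Ical \<nu>)))
       \<and> (\<forall>\<nu>::real. -1/2 < \<nu> \<longrightarrow>
            (\<exists>x\<^sub>\<nu>. sqrt (2 * (\<nu> + 3)) < x\<^sub>\<nu> \<and>
               strict_log_concave_on {0<..<x\<^sub>\<nu>} (deriv (Ical \<nu>)) \<and>
               strict_log_convex_on {x\<^sub>\<nu><..} (deriv (Ical \<nu>))))"
proof (intro conjI allI impI)
  fix \<nu> :: real assume "-1 < \<nu> \<and> \<nu> \<le> -1/2"
  then show "strict_log_concave_on {0<..} (deriv (Ical \<nu>))"
    by (intro deriv_Ical_log_concave laguerre_neg) auto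
next
  fix \<nu> :: real assume "-1 < \<nu>"
  then show "strict_log_concave_on {0<..<sqrt (2 * (\<nu> + 3))} (deriv (Ical \<nu>))"
    by (intro deriv_Ical_log_concave laguerre_neg_below_turning_point) auto
next
  fix \<nu> :: real assume "-1/2 < \<nu>"
  then have nu: "-1 < \<nu>" and pos: "2*\<nu>+1 > 0" by auto
  obtain x\<^sub>\<nu> where beyond: "sqrt (2 * (\<nu> + 3)) < x\<^sub>\<nu>"
    and below: "\<And>x. 0 \<le> x \<Longrightarrow> x < x\<^sub>\<nu> \<Longrightarrow> laguerre \<nu> x < 0"
    and above: "\<And>x. x\<^sub>\<nu> < x \<Longrightarrow> laguerre \<nu> x > 0"
    using laguerre_sign_change[OF nu pos] by blast
  have "sqrt (2 * (\<nu> + 3)) \<ge> 0" using nu by simp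
  then have "0 < x\<^sub>\<nu>" using beyond by linarith
  then show "\<exists>x\<^sub>\<nu>. sqrt (2 * (\<nu> + 3)) < x\<^sub>\<nu> \<and>
      strict_log_concave_on {0<..<x\<^sub>\<nu>} (deriv (Ical \<nu>)) \<and>
      strict_log_convex_on {x\<^sub>\<nu><..} (deriv (Ical \<nu>))"
    using beyond below above
    by (intro exI[of _ x\<^sub>\<nu>] conjI deriv_Ical_log_concave[OF nu] deriv_Ical_log_convex[OF nu]) auto
qed

end
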